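(* For every integer $r\ge 2$, $m(K_{1*r,3})=3$.
   Context: All graphs are finite, simple and undirected. A list assignment $L$ for a graph $G$ assigns to each vertex $v$ a set $L(v)$ of colors; an $L$-coloring is a proper vertex coloring $c$ of $G$ with $c(v)\in L(v)$ for every vertex $v$. A $k$-list assignment is a list assignment with $|L(v)|=k$ for all $v$. $G$ is uniquely $k$-list colorable (U$k$LC) if there exists a $k$-list assignment $L$ such that $G$ has exactly one $L$-coloring. $G$ has property $M(k)$ if it is not U$k$LC, i.e. for every $k$-list assignment $L$, $G$ has either no $L$-coloring or at least two $L$-colorings. The m-number $m(G)$ is the least integer $k\ge 1$ such that $G$ has property $M(k)$. $K_{1*r,s}$ denotes the complete $(r+1)$-partite graph with $r$ parts of size $1$ and one part of size $s$. *)

theory Defs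
  imports Main
begin

(* A finite simple graph is given by a finite vertex set V and a symmetric,
   irreflexive edge relation E. Colours are natural numbers. *)

definition k_list_assignment :: "'a set \<Rightarrow> ('a \<Rightarrow> nat set) \<Rightarrow> nat \<Rightarrow> bool" where
  "k_list_assignment V L k \<longleftrightarrow> (\<forall>v\<in>V. finite (L v) \<and> card (L v) = k)"

(* an L-colouring; to count colourings, the function is normalised to be
   'undefined' outside V *)
definition L_coloring :: "'a set \<Rightarrow> ('a \<Rightarrow> 'a \<Rightarrow> bool) \<Rightarrow> ('a \<Rightarrow> nat set) \<Rightarrow> ('a \<Rightarrow> nat) \<Rightarrow> bool" where
  "L_coloring V E L c \<longleftrightarrow>
     (\<forall>v\<in>V. c v \<in> L v) \<and>
     (\<forall>u\<in>V. \<forall>v\<in>V. E u v \<longrightarrow> c u \<noteq> c v) \<and>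
     (\<forall>v. v \<notin> V \<longrightarrow> c v = undefined)"

definition uniquely_k_list_colorable :: "'a set \<Rightarrow> ('a \<Rightarrow> 'a \<Rightarrow> bool) \<Rightarrow> nat \<Rightarrow> bool" where
  "uniquely_k_list_colorable V E k \<longleftrightarrow>
     (\<exists>L. k_list_assignment V L k \<and> (\<exists>!c. L_coloring V E L c))"

definition property_M :: "'a set \<Rightarrow> ('a \<Rightarrow> 'a \<Rightarrow> bool) \<Rightarrow> nat \<Rightarrow> bool" where
  "property_M V E k \<longleftrightarrow> \<not> uniquely_k_list_colorable V E k"

definition m_number :: "'a set \<Rightarrow> ('a \<Rightarrow> 'a \<Rightarrow> bool) \<Rightarrow> nat" where
  "m_number V E = (LEAST k. k \<ge> 1 \<and> property_M V E k)"

(* K_{1*r,s}: vertices 0..r+s-1; vertices 0..r-1 are the r singleton parts,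
   vertices r..r+s-1 form the part of size s. *)
definition K1rs_vertices :: "nat \<Rightarrow> nat \<Rightarrow> nat set" where
  "K1rs_vertices r s = {0..<r+s}"

definition K1rs_edge :: "nat \<Rightarrow> nat \<Rightarrow> nat \<Rightarrow> bool" where
  "K1rs_edge r u v \<longleftrightarrow> u \<noteq> v \<and> \<not> (r \<le> u \<and> r \<le> v)"

end

(*
  Lower bounds: K_{1*r,s} is uniquely 1-list colourable via the lists {v}, and, for r, s >= 2,
  uniquely 2-list colourable via the lists {v, r} on the singleton parts and {r, 0} or {r, 1}
  on the big part: giving some singleton vertex the colour r forces the big part onto 0 and 1,
  which then leaves both vertices 0 and 1 with colour r.

  Upper bound: in a proper colouring of K_{1*r,s} with s <= 3 every singleton part carries a
  colour used nowhere else, and at most one colour is repeated (two would need four vertices of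
  the big part). Take lists of size >= 3. If some vertex u with a private colour has an unused
  colour in its list, recolour u. Otherwise every such u has in its list the private colour of
  another such vertex g u (any list colour besides c u and the repeated one). A nonempty set on
  which g is bijective exists by finiteness, and moving the colours along g on it is a second
  colouring.
*)
theory Submission
  imports Defs "HOL-Combinatorics.Permutations"
begin

definition singleton_class_vertices :: "'a set \<Rightarrow> ('a \<Rightarrow> nat) \<Rightarrow> 'a set" where
  "singleton_class_vertices V c = {u \<in> V. \<forall>w\<in>V. w \<noteq> u \<longrightarrow> c w \<noteq> c u}"

lemma L_coloring_fun_upd_unused_colour:
  assumes "L_coloring V E L c" "u \<in> V" "x \<in> L u" "x \<notin> c ` V"
  shows "L_coloring V E L (c(u := x))"
  using assms unfolding L_coloring_def by (auto simp: image_iff)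

lemma L_coloring_comp_permutes:
  assumes col: "L_coloring V E L c"
    and perm: "\<sigma> permutes Y"
    and Y: "Y \<subseteq> singleton_class_vertices V c"
    and lists: "\<And>u. u \<in> Y \<Longrightarrow> c (\<sigma> u) \<in> L u"
  shows "L_coloring V E L (c \<circ> \<sigma>)"
proof -
  have YV: "Y \<subseteq> V"
    using Y by (auto simp: singleton_class_vertices_def)
  have unique: "c w \<noteq> c y" if "y \<in> Y" "w \<in> V" "w \<noteq> y" for y w
    using Y that by (auto simp: singleton_class_vertices_def)
  note fixed = permutes_not_in[OF perm]
  have "c (\<sigma> v) \<in> L v" if "v \<in> V" for v
    using col lists fixed that by (cases "v \<in> Y") (auto simp: L_coloring_def)
  moreover have "c (\<sigma> u) \<noteq> c (\<sigma> v)" if uv: "u \<in> V" "v \<in> V" "E u v" for u v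
  proof -
    have "c u \<noteq> c v"
      using col uv by (auto simp: L_coloring_def)
    moreover have "\<sigma> u \<noteq> \<sigma> v"
      using \<open>c u \<noteq> c v\<close> permutes_inj[OF perm] by (auto dest: injD)
    moreover have "\<sigma> u \<in> V" "\<sigma> v \<in> V"
      using uv permutes_in_image[OF permutes_subset[OF perm YV]] by auto
    ultimately show ?thesis
      using unique permutes_in_image[OF perm] fixed
      by (cases "u \<in> Y"; cases "v \<in> Y") (auto, metis+)
  qed
  moreover have "c (\<sigma> v) = undefined" if "v \<notin> V" for v
  proof -
    have "\<sigma> v = v"
      using fixed YV that by blast
    then show ?thesis
      using col that by (simp add: L_coloring_def)
  qed
  ultimately show ?thesis
    by (auto simp: L_coloring_def)
qed

lemma finite_self_map_bij_betw_subset: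
  assumes "finite X" "X \<noteq> {}" "g ` X \<subseteq> X"
  shows "\<exists>Y\<subseteq>X. Y \<noteq> {} \<and> bij_betw g Y Y"
proof -
  define invariant where "invariant Y \<longleftrightarrow> Y \<subseteq> X \<and> Y \<noteq> {} \<and> g ` Y \<subseteq> Y" for Y
  obtain Y where Y: "invariant Y" and min: "\<And>Z. invariant Z \<Longrightarrow> card Y \<le> card Z"
    using ex_has_least_nat[of invariant X card] assms by (auto simp: invariant_def)
  have "finite Y"
    using Y assms(1) finite_subset by (auto simp: invariant_def)
  have "invariant (g ` Y)"
    using Y by (auto simp: invariant_def)
  then have "card (g ` Y) = card Y"
    using min card_image_le[OF \<open>finite Y\<close>] by (meson le_antisym)
  then have "g ` Y = Y" "inj_on g Y"
    using Y card_subset_eq[OF \<open>finite Y\<close>] eq_card_imp_inj_on[OF \<open>finite Y\<close>]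
    by (auto simp: invariant_def)
  then show ?thesis
    using Y by (auto simp: invariant_def bij_betw_def)
qed

lemma L_coloring_not_unique:
  assumes "finite V"
    and lists: "k_list_assignment V L k" "3 \<le> k"
    and col: "L_coloring V E L c"
    and X_ne: "singleton_class_vertices V c \<noteq> {}"
    and repeated: "\<And>w w'. w \<in> V - singleton_class_vertices V c \<Longrightarrow>
        w' \<in> V - singleton_class_vertices V c \<Longrightarrow> c w = c w'"
  shows "\<exists>c'. L_coloring V E L c' \<and> c' \<noteq> c"
proof -
  define X where "X = singleton_class_vertices V c"
  have XV: "X \<subseteq> V"
    by (auto simp: X_def singleton_class_vertices_def)
  have unique: "c w \<noteq> c u" if "u \<in> X" "w \<in> V" "w \<noteq> u" for u w
    using that by (auto simp: X_def singleton_class_vertices_def)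
  obtain s where s: "\<And>w. w \<in> V - X \<Longrightarrow> c w = s"
    using repeated unfolding X_def by blast
  show ?thesis
  proof (cases "\<exists>u\<in>X. \<exists>x\<in>L u. x \<notin> c ` V")
    case True
    then obtain u x where u: "u \<in> X" "x \<in> L u" "x \<notin> c ` V"
      by blast
    then have "L_coloring V E L (c(u := x))" "c u \<noteq> x"
      using L_coloring_fun_upd_unused_colour[OF col] XV by auto
    then show ?thesis
      by (metis fun_upd_same)
  next
    case False
    have "\<exists>w\<in>X. w \<noteq> u \<and> c w \<in> L u" if u: "u \<in> X" for u
    proof -
      have "finite (L u)" "3 \<le> card (L u)"
        using lists u XV by (auto simp: k_list_assignment_def)
      moreover have "card (L u) - card {c u, s} \<le> card (L u - {c u, s})"
        by (rule diff_card_le_card_Diff) simp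
      moreover have "card {c u, s} \<le> 2"
        by (simp add: card_insert_if)
      ultimately have "card (L u - {c u, s}) > 0"
        by linarith
      then obtain x where x: "x \<in> L u" "x \<noteq> c u" "x \<noteq> s"
        by (metis DiffE card_gt_0_iff ex_in_conv insertCI)
      then obtain w where "w \<in> V" "c w = x"
        using False u by (metis imageE)
      moreover have "w \<in> X"
        using s x \<open>w \<in> V\<close> \<open>c w = x\<close> by blast
      ultimately show ?thesis
        using x by auto
    qed
    then obtain g where g: "\<And>u. u \<in> X \<Longrightarrow> g u \<in> X \<and> g u \<noteq> u \<and> c (g u) \<in> L u"
      by metis
    obtain Y where Y: "Y \<subseteq> X" "Y \<noteq> {}" "bij_betw g Y Y"
      using finite_self_map_bij_betw_subset[of X g] finite_subset[OF XV \<open>finite V\<close>] X_ne g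
      unfolding X_def by blast
    define \<sigma> where "\<sigma> u = (if u \<in> Y then g u else u)" for u
    have "\<sigma> permutes Y"
      using Y(3) by (intro bij_imp_permutes) (auto simp: \<sigma>_def cong: bij_betw_cong)
    then have "L_coloring V E L (c \<circ> \<sigma>)"
      using Y(1) g by (intro L_coloring_comp_permutes[OF col]) (auto simp: X_def \<sigma>_def)
    moreover obtain u where "u \<in> Y"
      using Y(2) by blast
    then have "c (\<sigma> u) \<noteq> c u"
      using g[of u] Y(1) XV unique[of u "g u"] by (auto simp: \<sigma>_def)
    ultimately show ?thesis
      by (metis comp_apply)
  qed
qed

lemma K1rs_singleton_part_singleton_class:
  assumes "L_coloring (K1rs_vertices r s) (K1rs_edge r) L c" "v < r"
  shows "v \<in> singleton_class_vertices (K1rs_vertices r s) c"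
  using assms by (auto simp: singleton_class_vertices_def L_coloring_def K1rs_vertices_def K1rs_edge_def)

lemma K1rs_repeated_colours_agree:
  assumes col: "L_coloring (K1rs_vertices r s) (K1rs_edge r) L c" and "s \<le> 3"
    and w: "w \<in> K1rs_vertices r s - singleton_class_vertices (K1rs_vertices r s) c"
    and w': "w' \<in> K1rs_vertices r s - singleton_class_vertices (K1rs_vertices r s) c"
  shows "c w = c w'"
proof (rule ccontr)
  let ?V = "K1rs_vertices r s" and ?X = "singleton_class_vertices (K1rs_vertices r s) c"
  assume "c w \<noteq> c w'"
  obtain v where v: "v \<in> ?V" "v \<noteq> w" "c v = c w"
    using w by (auto simp: singleton_class_vertices_def)
  obtain v' where v': "v' \<in> ?V" "v' \<noteq> w'" "c v' = c w'"
    using w' by (auto simp: singleton_class_vertices_def)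
  have "v \<notin> ?X" "v' \<notin> ?X"
    using v v' w w' by (force simp: singleton_class_vertices_def)+
  then have "r \<le> w" "r \<le> w'" "r \<le> v" "r \<le> v'"
    using w w' K1rs_singleton_part_singleton_class[OF col] by (meson DiffD2 not_le)+
  moreover have "w < r + s" "w' < r + s" "v < r + s" "v' < r + s"
    using v v' w w' by (auto simp: K1rs_vertices_def)
  moreover have "w \<noteq> w'" "w \<noteq> v'" "v \<noteq> w'" "v \<noteq> v'"
    using \<open>c w \<noteq> c w'\<close> v v' by auto
  ultimately show False
    using v v' \<open>s \<le> 3\<close> by linarith
qed

lemma K1rs_property_M:
  assumes "1 \<le> r" "s \<le> 3" "3 \<le> k"
  shows "property_M (K1rs_vertices r s) (K1rs_edge r) k"
  unfolding property_M_def uniquely_k_list_colorable_def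
proof
  let ?V = "K1rs_vertices r s" and ?E = "K1rs_edge r"
  assume "\<exists>L. k_list_assignment ?V L k \<and> (\<exists>!c. L_coloring ?V ?E L c)"
  then obtain L c where lists: "k_list_assignment ?V L k" and col: "L_coloring ?V ?E L c"
    and unique: "\<And>c'. L_coloring ?V ?E L c' \<Longrightarrow> c' = c"
    by blast
  have "0 \<in> singleton_class_vertices ?V c"
    using K1rs_singleton_part_singleton_class[OF col] assms(1) by simp
  then obtain c' where "L_coloring ?V ?E L c'" "c' \<noteq> c"
    using L_coloring_not_unique[OF _ lists assms(3) col] K1rs_repeated_colours_agree[OF col assms(2)]
    by (fastforce simp: K1rs_vertices_def)
  then show False
    using unique by blast
qed

lemma uniquely_1_list_colorable_nat:
  assumes "\<And>u v. E u v \<Longrightarrow> u \<noteq> v"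
  shows "uniquely_k_list_colorable (V :: nat set) E 1"
proof -
  define c where "c v = (if v \<in> V then v else undefined)" for v
  have "L_coloring V E (\<lambda>v. {v}) c' \<longleftrightarrow> c' = c" for c'
    using assms by (auto simp: L_coloring_def c_def)
  then show ?thesis
    unfolding uniquely_k_list_colorable_def k_list_assignment_def by force
qed

lemma K1rs_uniquely_2_list_colorable:
  assumes "2 \<le> r" "2 \<le> s"
  shows "uniquely_k_list_colorable (K1rs_vertices r s) (K1rs_edge r) 2"
proof -
  let ?V = "K1rs_vertices r s" and ?E = "K1rs_edge r"
  define L where "L v = (if v < r then {v, r} else if v = r + 1 then {r, 1} else {r, 0})" for v
  define c0 where "c0 v = (if v \<in> ?V then if v < r then v else r else undefined)" for v
  have V: "v \<in> ?V \<longleftrightarrow> v < r + s" for v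
    by (simp add: K1rs_vertices_def)
  have "k_list_assignment ?V L 2"
    using assms by (auto simp: k_list_assignment_def L_def)
  moreover have "L_coloring ?V ?E L c0"
    by (auto simp: L_coloring_def L_def c0_def K1rs_edge_def V)
  moreover have "c = c0" if col: "L_coloring ?V ?E L c" for c
  proof -
    have lists: "\<And>v. v < r + s \<Longrightarrow> c v \<in> L v"
      and proper: "\<And>u v. u < r + s \<Longrightarrow> v < r + s \<Longrightarrow> ?E u v \<Longrightarrow> c u \<noteq> c v"
      using col by (auto simp: L_coloring_def V)
    have adjacent: "?E u v" if "u \<noteq> v" "u < r \<or> v < r" for u v
      using that by (auto simp: K1rs_edge_def)
    have own: "c i = i" if "i < r" for i
    proof (rule ccontr)
      assume "c i \<noteq> i"
      then have "c i = r"
        using lists[of i] that by (auto simp: L_def)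
      then have "c r = 0" "c (r + 1) = 1"
        using lists[of r] lists[of "r + 1"] proper[of i r] proper[of i "r + 1"] adjacent that assms
        by (auto simp: L_def)
      then have "c 0 = r" "c 1 = r"
        using lists[of 0] lists[of 1] proper[of 0 r] proper[of 1 "r + 1"] adjacent assms
        by (auto simp: L_def)
      then show False
        using proper[of 0 1] adjacent assms by auto
    qed
    have shared: "c v = r" if "r \<le> v" "v < r + s" for v
      using lists[of v] proper[of v 0] proper[of v 1] adjacent own[of 0] own[of 1] assms that
      by (auto simp: L_def split: if_splits)
    show ?thesis
    proof
      fix v
      show "c v = c0 v"
        using own shared col by (cases "v \<in> ?V") (auto simp: c0_def V L_coloring_def)
    qed
  qed
  ultimately show ?thesis
    unfolding uniquely_k_list_colorable_def by blast
qed

lemma m_number_eqI: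
  assumes "1 \<le> k" "property_M V E k" "\<And>j. 1 \<le> j \<Longrightarrow> j < k \<Longrightarrow> \<not> property_M V E j"
  shows "m_number V E = k"
  unfolding m_number_def using assms by (intro Least_equality) (auto simp: not_less[symmetric])

theorem proposition3p7:
  fixes r :: nat
  assumes "r \<ge> 2"
  shows "m_number (K1rs_vertices r 3) (K1rs_edge r) = 3"
proof (rule m_number_eqI)
  show "property_M (K1rs_vertices r 3) (K1rs_edge r) 3"
    using assms by (intro K1rs_property_M) auto
  fix j :: nat
  assume "1 \<le> j" "j < 3"
  then consider "j = 1" | "j = 2"
    by linarith
  then show "\<not> property_M (K1rs_vertices r 3) (K1rs_edge r) j"
    using uniquely_1_list_colorable_nat[of "K1rs_edge r"] K1rs_uniquely_2_list_colorable[OF assms]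
    by cases (auto simp: property_M_def K1rs_edge_def)
qed simp

end
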